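(* Let $M=(S,\Sigma,\delta,s_0,F)$ be a deterministic finite automaton, let $T\ge 1$ be an integer, and for each $s\in S$ let $P(\cdot\mid s)$ and $Q(\cdot\mid s)$ be probability distributions on $\Sigma$. Define distributions $P$ and $Q$ on $\Sigma^T$ by $P(x)=\prod_{t=1}^T P(\sigma_t\mid s_t)$ and $Q(x)=\prod_{t=1}^T Q(\sigma_t\mid s_t)$ for $x=\sigma_1\cdots\sigma_T$, where $s_1\cdots s_{T+1}$ is the state sequence induced by $x$, and let $f^*(x)=\mathbb{1}(s_{T+1}\in F)$. Define $P_t$ on $S$ by $P_1(s')=\mathbb{1}(s'=s_0)$ and $P_t(s')=\mathbb{P}_{s\sim P_{t-1},\sigma\sim P(\cdot\mid s)}[s'=\delta(s,\sigma)]$ for $t\ge2$, and $P_t(s,\sigma)=P_t(s)P(\sigma\mid s)$. Let $\hat g:S\times\Sigma\to S$ and $\hat h:S\to\{0,1\}$ be arbitrary functions, and define $\hat f:\Sigma^T\to\{0,1\}$ by $\hat f(\sigma_1\cdots\sigma_T)=\hat h(\hat s_{T+1})$, where $\hat s_1=s_0$ and $\hat s_{t+1}=\hat g(\hat s_t,\sigma_t)$. Let $\epsilon=\max_{s\in S}\mathrm{TV}(P(\sigma\mid s),Q(\sigma\mid s))$ and $$\tilde L_P(\hat f)=\sum_{t=1}^T L_{P_t}(\hat g)+L_{P_{T+1}}(\hat h).$$ Then $$L_Q(\hat f)\le \tilde L_P(\hat f)+2T^2\epsilon.$$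
   Context: A deterministic finite automaton $M=(S,\Sigma,\delta,s_0,F)$ has a finite state set $S$, a finite alphabet $\Sigma$, a transition function $\delta:S\times\Sigma\to S$, an initial state $s_0\in S$ and final states $F\subseteq S$. For $x=\sigma_1\cdots\sigma_T$, the induced state sequence is $s_1=s_0$, $s_{t+1}=\delta(s_t,\sigma_t)$. Losses: $L_Q(\hat f)=\mathbb{P}_{x\sim Q}[\hat f(x)\neq f^*(x)]$; $L_{P_t}(\hat g)=\mathbb{P}_{(s,\sigma)\sim P_t(s,\sigma)}[\hat g(s,\sigma)\neq\delta(s,\sigma)]$; $L_{P_{T+1}}(\hat h)=\mathbb{P}_{s\sim P_{T+1}}[\hat h(s)\neq\mathbb{1}(s\in F)]$. The total variation distance is defined without the factor $1/2$: $\mathrm{TV}(\mu,\nu)=\sum_a|\mu(a)-\nu(a)|$. *)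

theory Defs
  imports Complex_Main
begin

text \<open>The final state s_{T+1}
  reached from s from reading xs is foldl delta s xs.\<close>

definition run :: "('a \<Rightarrow> 'b \<Rightarrow> 'a) \<Rightarrow> 'a \<Rightarrow> 'b list \<Rightarrow> 'a" where
  "run delta s xs = foldl delta s xs"

fun word_prob :: "('a \<Rightarrow> 'b \<Rightarrow> real) \<Rightarrow> ('a \<Rightarrow> 'b \<Rightarrow> 'a) \<Rightarrow> 'a \<Rightarrow> 'b list \<Rightarrow> real" where
  "word_prob P delta s [] = 1"
| "word_prob P delta s (c # xs) = P s c * word_prob P delta (delta s c) xs"

text \<open>State marginal: state_dist P delta s0 n = P_{n+1} (paper's 1-based indexing).\<close>
fun state_dist :: "('a::finite \<Rightarrow> 'b::finite \<Rightarrow> real) \<Rightarrow> ('a \<Rightarrow> 'b \<Rightarrow> 'a) \<Rightarrow> 'a \<Rightarrow> nat \<Rightarrow> 'a \<Rightarrow> real" where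
  "state_dist P delta s0 0 s' = (if s' = s0 then 1 else 0)"
| "state_dist P delta s0 (Suc n) s' =
     (\<Sum>s\<in>UNIV. \<Sum>c\<in>UNIV. state_dist P delta s0 n s * P s c * (if s' = delta s c then 1 else 0))"

definition P_t :: "('a::finite \<Rightarrow> 'b::finite \<Rightarrow> real) \<Rightarrow> ('a \<Rightarrow> 'b \<Rightarrow> 'a) \<Rightarrow> 'a \<Rightarrow> nat \<Rightarrow> 'a \<Rightarrow> real" where
  "P_t P delta s0 t = state_dist P delta s0 (t - 1)"

definition word_loss :: "('a \<Rightarrow> 'b \<Rightarrow> real) \<Rightarrow> ('a \<Rightarrow> 'b \<Rightarrow> 'a) \<Rightarrow> 'a \<Rightarrow> nat
    \<Rightarrow> ('b list \<Rightarrow> bool) \<Rightarrow> ('b list \<Rightarrow> bool) \<Rightarrow> real" where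
  "word_loss Q delta s0 T fhat fstar =
     (\<Sum>x\<in>{xs. length xs = T}. word_prob Q delta s0 x * (if fhat x \<noteq> fstar x then 1 else 0))"

definition trans_loss :: "('a::finite \<times> 'b::finite \<Rightarrow> real) \<Rightarrow> ('a \<Rightarrow> 'b \<Rightarrow> 'a) \<Rightarrow> ('a \<Rightarrow> 'b \<Rightarrow> 'a) \<Rightarrow> real" where
  "trans_loss D ghat delta = (\<Sum>(s,c)\<in>UNIV. D (s,c) * (if ghat s c \<noteq> delta s c then 1 else 0))"

definition final_loss :: "('a::finite \<Rightarrow> real) \<Rightarrow> ('a \<Rightarrow> bool) \<Rightarrow> 'a set \<Rightarrow> real" where
  "final_loss D hhat F = (\<Sum>s\<in>UNIV. D s * (if hhat s \<noteq> (s \<in> F) then 1 else 0))"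

text \<open>Total variation without the factor 1/2.\<close>
definition TV :: "('b::finite \<Rightarrow> real) \<Rightarrow> ('b \<Rightarrow> real) \<Rightarrow> real" where
  "TV mu nu = (\<Sum>c\<in>UNIV. \<bar>mu c - nu c\<bar>)"

definition is_cond_dist :: "('a \<Rightarrow> 'b::finite \<Rightarrow> real) \<Rightarrow> bool" where
  "is_cond_dist P \<longleftrightarrow> (\<forall>s c. 0 \<le> P s c) \<and> (\<forall>s. (\<Sum>c\<in>UNIV. P s c) = 1)"

end

theory Submission
  imports Defs
begin

text \<open>Replacing the letter distributions Q by P changes the probability of any set of words of
  length T by at most the l1 distance of the two word distributions; swapping the letter
  distribution one position at a time bounds that distance by T times the largest per-state
  total variation. Under P, the learned automaton can misclassify a word only if one of the T
  learned transitions is wrong at the true state and letter of that step, or if the learned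
  classifier is wrong at the true final state. A union bound over these T+1 events gives the
  sum of the losses under the marginals P_t, so the theorem holds even with T*eps in place of
  2*T^2*eps.\<close>

abbreviation words :: "nat \<Rightarrow> 'b list set" where
  "words n \<equiv> {xs. length xs = n}"

lemma sum_words_append:
  fixes f :: "'a list \<Rightarrow> 'b::comm_monoid_add"
  shows "(\<Sum>x\<in>words (n + m). f x) = (\<Sum>x\<in>words n. \<Sum>y\<in>words m. f (x @ y))"
proof -
  have words_eq: "(words (n + m) :: 'a list set) = (\<lambda>(x, y). x @ y) ` (words n \<times> words m)"
  proof safe
    fix x :: "'a list"
    assume "length x = n + m"
    then show "x \<in> (\<lambda>(x, y). x @ y) ` (words n \<times> words m)"
      by (intro image_eqI[of _ _ "(take n x, drop n x)"]) auto
  qed auto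
  have "inj_on (\<lambda>(x, y). x @ y) (words n \<times> words m)"
    by (auto simp: inj_on_def)
  then show ?thesis
    unfolding words_eq by (subst sum.reindex) (simp_all add: sum.cartesian_product split_def)
qed

lemma sum_words_Suc:
  "(\<Sum>x\<in>words (Suc n). f x) = (\<Sum>c\<in>UNIV. \<Sum>x\<in>words n. f (c # x))"
proof -
  have words_eq: "words (Suc n) = (\<lambda>(c, x). c # x) ` (UNIV \<times> words n)"
    by (auto simp: length_Suc_conv image_iff)
  have "inj_on (\<lambda>(c, x). c # x) (UNIV \<times> words n)"
    by (auto simp: inj_on_def)
  then show ?thesis
    unfolding words_eq by (subst sum.reindex) (simp_all add: sum.cartesian_product split_def)
qed

lemma sum_words_snoc:
  "(\<Sum>x\<in>words (Suc n). f x) = (\<Sum>x\<in>words n. \<Sum>c\<in>UNIV. f (x @ [c]))"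
proof -
  have "words 0 = {[]}"
    by auto
  then show ?thesis
    using sum_words_append[of f n 1] by (simp add: sum_words_Suc)
qed

lemma run_snoc: "run d s (xs @ [c]) = d (run d s xs) c"
  by (simp add: run_def)

lemma word_prob_append:
  "word_prob P d s (xs @ ys) = word_prob P d s xs * word_prob P d (run d s xs) ys"
  by (induction xs arbitrary: s) (auto simp: run_def)

lemma word_prob_nonneg: "is_cond_dist P \<Longrightarrow> 0 \<le> word_prob P d s x"
  by (induction x arbitrary: s) (auto simp: is_cond_dist_def)

lemma sum_word_prob_eq_1:
  fixes P :: "'a \<Rightarrow> 'b::finite \<Rightarrow> real"
  assumes "is_cond_dist P"
  shows "(\<Sum>x\<in>words n. word_prob P d s x) = 1"
proof (induction n arbitrary: s)
  case 0
  then show ?case by simp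
next
  case (Suc n)
  then show ?case
    using assms by (simp add: sum_words_Suc sum_distrib_left[symmetric] is_cond_dist_def)
qed

lemma sum_word_prob_prefix:
  fixes P :: "'a \<Rightarrow> 'b::finite \<Rightarrow> real"
  assumes "is_cond_dist P"
  shows "(\<Sum>x\<in>words (n + m). word_prob P d s x * g (take n x))
    = (\<Sum>x\<in>words n. word_prob P d s x * g x)"
proof -
  have "(\<Sum>y\<in>words m. word_prob P d s (x @ y) * g (take n (x @ y))) = word_prob P d s x * g x"
    if "length x = n" for x
    using that sum_word_prob_eq_1[OF assms]
    by (simp add: word_prob_append sum_distrib_left[symmetric] mult_ac)
  then show ?thesis
    by (simp add: sum_words_append)
qed

lemma sum_word_prob_snoc:
  "(\<Sum>x\<in>words (Suc n). word_prob P d s x * g x)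
    = (\<Sum>x\<in>words n. word_prob P d s x * (\<Sum>c\<in>UNIV. P (run d s x) c * g (x @ [c])))"
  by (simp add: sum_words_snoc word_prob_append sum_distrib_left mult.assoc)

lemma sum_state_dist_Suc:
  "(\<Sum>s'\<in>UNIV. state_dist P d s0 (Suc n) s' * h s')
    = (\<Sum>s\<in>UNIV. state_dist P d s0 n s * (\<Sum>c\<in>UNIV. P s c * h (d s c)))"
proof -
  have "(\<Sum>s'\<in>UNIV. state_dist P d s0 (Suc n) s' * h s')
      = (\<Sum>s'\<in>UNIV. \<Sum>s\<in>UNIV. \<Sum>c\<in>UNIV.
          state_dist P d s0 n s * P s c * (if s' = d s c then 1 else 0) * h s')"
    by (simp only: state_dist.simps sum_distrib_right)
  also have "\<dots> = (\<Sum>s\<in>UNIV. \<Sum>s'\<in>UNIV. \<Sum>c\<in>UNIV.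
          state_dist P d s0 n s * P s c * (if s' = d s c then 1 else 0) * h s')"
    by (rule sum.swap)
  also have "\<dots> = (\<Sum>s\<in>UNIV. \<Sum>c\<in>UNIV. \<Sum>s'\<in>UNIV.
          state_dist P d s0 n s * P s c * (if s' = d s c then 1 else 0) * h s')"
    by (rule sum.cong[OF refl], rule sum.swap)
  also have "\<dots> = (\<Sum>s\<in>UNIV. \<Sum>c\<in>UNIV. state_dist P d s0 n s * P s c * h (d s c))"
    by (simp add: if_distrib[of "\<lambda>x. _ * x * _"] cong: if_cong)
  also have "\<dots> = (\<Sum>s\<in>UNIV. state_dist P d s0 n s * (\<Sum>c\<in>UNIV. P s c * h (d s c)))"
    by (simp add: sum_distrib_left mult.assoc)
  finally show ?thesis .
qed

lemma sum_word_prob_run: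
  "(\<Sum>x\<in>words n. word_prob P d s0 x * h (run d s0 x)) = (\<Sum>s\<in>UNIV. state_dist P d s0 n s * h s)"
proof (induction n arbitrary: h)
  case 0
  have "words 0 = {[]}"
    by auto
  then show ?case
    by (simp add: run_def if_distrib[of "\<lambda>x. x * _"] cong: if_cong)
next
  case (Suc n)
  then show ?case
    by (simp add: sum_word_prob_snoc run_snoc sum_state_dist_Suc del: state_dist.simps)
qed

lemma sum_word_prob_step:
  assumes "is_cond_dist P" and "t < T"
  shows "(\<Sum>x\<in>words T. word_prob P d s0 x * h (run d s0 (take t x)) (x ! t))
    = (\<Sum>s\<in>UNIV. state_dist P d s0 t s * (\<Sum>c\<in>UNIV. P s c * h s c))"
proof -
  obtain m where T: "T = Suc t + m"
    using \<open>t < T\<close> less_imp_Suc_add by blast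
  let ?g = "\<lambda>x. h (run d s0 (take t x)) (x ! t)"
  have "(\<Sum>x\<in>words T. word_prob P d s0 x * ?g x)
      = (\<Sum>x\<in>words (Suc t + m). word_prob P d s0 x * ?g (take (Suc t) x))"
    by (rule sum.cong) (auto simp: T)
  also have "\<dots> = (\<Sum>x\<in>words (Suc t). word_prob P d s0 x * ?g x)"
    by (rule sum_word_prob_prefix[OF assms(1)])
  also have "\<dots> = (\<Sum>x\<in>words t. word_prob P d s0 x * (\<Sum>c\<in>UNIV. P (run d s0 x) c * h (run d s0 x) c))"
    unfolding sum_word_prob_snoc by (intro sum.cong refl) (simp add: nth_append)
  also have "\<dots> = (\<Sum>s\<in>UNIV. state_dist P d s0 t s * (\<Sum>c\<in>UNIV. P s c * h s c))"
    by (rule sum_word_prob_run)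
  finally show ?thesis .
qed

lemma abs_mult_diff_le:
  fixes p q a b :: real
  assumes "0 \<le> a" and "0 \<le> q"
  shows "\<bar>p * a - q * b\<bar> \<le> \<bar>p - q\<bar> * a + q * \<bar>a - b\<bar>"
proof -
  have "\<bar>p * a - q * b\<bar> = \<bar>(p - q) * a + q * (a - b)\<bar>"
    by (simp add: algebra_simps)
  also have "\<dots> \<le> \<bar>p - q\<bar> * a + q * \<bar>a - b\<bar>"
    using abs_triangle_ineq[of "(p - q) * a" "q * (a - b)"] assms by (simp add: abs_mult)
  finally show ?thesis .
qed

lemma sum_abs_word_prob_diff_le:
  assumes P: "is_cond_dist P" and Q: "is_cond_dist Q" and TV_le: "\<And>s. TV (P s) (Q s) \<le> e"
  shows "(\<Sum>x\<in>words n. \<bar>word_prob P d s x - word_prob Q d s x\<bar>) \<le> real n * e"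
proof (induction n arbitrary: s)
  case 0
  then show ?case by simp
next
  case (Suc n)
  let ?p = "\<lambda>c x. word_prob P d (d s c) x" and ?q = "\<lambda>c x. word_prob Q d (d s c) x"
  have "(\<Sum>x\<in>words (Suc n). \<bar>word_prob P d s x - word_prob Q d s x\<bar>)
      = (\<Sum>c\<in>UNIV. \<Sum>x\<in>words n. \<bar>P s c * ?p c x - Q s c * ?q c x\<bar>)"
    by (simp add: sum_words_Suc)
  also have "\<dots> \<le> (\<Sum>c\<in>UNIV. \<Sum>x\<in>words n. \<bar>P s c - Q s c\<bar> * ?p c x + Q s c * \<bar>?p c x - ?q c x\<bar>)"
    using Q word_prob_nonneg[OF P]
    by (intro sum_mono abs_mult_diff_le) (auto simp: is_cond_dist_def)
  also have "\<dots> = (\<Sum>c\<in>UNIV. \<bar>P s c - Q s c\<bar>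
      + Q s c * (\<Sum>x\<in>words n. \<bar>?p c x - ?q c x\<bar>))"
    by (simp add: sum.distrib sum_distrib_left[symmetric] sum_word_prob_eq_1[OF P])
  also have "\<dots> \<le> (\<Sum>c\<in>UNIV. \<bar>P s c - Q s c\<bar> + Q s c * (real n * e))"
    using Suc Q by (intro sum_mono add_left_mono mult_left_mono) (auto simp: is_cond_dist_def)
  also have "\<dots> = TV (P s) (Q s) + real n * e"
    using Q by (simp add: sum.distrib TV_def sum_distrib_right[symmetric] is_cond_dist_def)
  also have "\<dots> \<le> real (Suc n) * e"
    using TV_le[of s] by (simp add: algebra_simps)
  finally show ?case .
qed

lemma TV_nonneg: "0 \<le> TV mu nu"
  by (simp add: TV_def sum_nonneg)

lemma word_loss_change_measure:
  assumes "is_cond_dist P" and "is_cond_dist Q" and "\<And>s. TV (P s) (Q s) \<le> e"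
  shows "word_loss Q d s0 T f g \<le> word_loss P d s0 T f g + real T * e"
proof -
  have "word_loss Q d s0 T f g
      \<le> (\<Sum>x\<in>words T. word_prob P d s0 x * (if f x \<noteq> g x then 1 else 0)
          + \<bar>word_prob P d s0 x - word_prob Q d s0 x\<bar>)"
    unfolding word_loss_def by (intro sum_mono) auto
  also have "\<dots> \<le> word_loss P d s0 T f g + real T * e"
    using sum_abs_word_prob_diff_le[OF assms] by (simp add: word_loss_def sum.distrib)
  finally show ?thesis .
qed

lemma run_eq_if_transitions_agree:
  assumes "\<And>t. t < length x \<Longrightarrow> g (run d s (take t x)) (x ! t) = d (run d s (take t x)) (x ! t)"
  shows "run g s x = run d s x"
  using assms
proof (induction x rule: rev_induct)
  case Nil
  then show ?case by (simp add: run_def)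
next
  case (snoc c xs)
  have "run g s xs = run d s xs"
  proof (rule snoc.IH)
    fix t
    assume "t < length xs"
    then show "g (run d s (take t xs)) (xs ! t) = d (run d s (take t xs)) (xs ! t)"
      using snoc.prems[of t] by (simp add: nth_append)
  qed
  moreover have "g (run d s xs) c = d (run d s xs) c"
    using snoc.prems[of "length xs"] by simp
  ultimately show ?case
    by (simp add: run_snoc)
qed

lemma misclassification_le_errors:
  fixes g d :: "'a \<Rightarrow> 'b \<Rightarrow> 'a" and s :: 'a and x :: "'b list"
  defines "err \<equiv> \<lambda>t. if g (run d s (take t x)) (x ! t) \<noteq> d (run d s (take t x)) (x ! t)
    then 1 else 0 :: real"
  shows "(if h (run g s x) \<noteq> (run d s x \<in> F) then 1 else 0 :: real)
    \<le> (\<Sum>t<length x. err t) + (if h (run d s x) \<noteq> (run d s x \<in> F) then 1 else 0)"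
proof -
  have err_sum_nonneg: "0 \<le> (\<Sum>t<length x. err t)"
    unfolding err_def by (rule sum_nonneg) simp
  show ?thesis
  proof (cases "run g s x = run d s x")
    case True
    with err_sum_nonneg show ?thesis
      by simp
  next
    case False
    then obtain t where "t < length x" and "err t = 1"
      using run_eq_if_transitions_agree unfolding err_def by metis
    moreover have "err t \<le> (\<Sum>t<length x. err t)" if "t < length x" for t
      using that by (intro member_le_sum) (auto simp: err_def)
    ultimately show ?thesis
      by (smt (verit))
  qed
qed

lemma trans_loss_P_t_Suc:
  "trans_loss (\<lambda>(s, c). P_t P d s0 (Suc t) s * P s c) g d
    = (\<Sum>s\<in>UNIV. state_dist P d s0 t s * (\<Sum>c\<in>UNIV. P s c * (if g s c \<noteq> d s c then 1 else 0)))"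
  unfolding trans_loss_def P_t_def
  by (simp add: UNIV_Times_UNIV[symmetric] sum.cartesian_product[symmetric] sum_distrib_left
      mult.assoc del: UNIV_Times_UNIV)

lemma word_loss_le_surrogate_loss:
  assumes "is_cond_dist P"
  shows "word_loss P delta s0 T (\<lambda>x. hhat (run ghat s0 x)) (\<lambda>x. run delta s0 x \<in> F)
    \<le> (\<Sum>t=1..T. trans_loss (\<lambda>(s, c). P_t P delta s0 t s * P s c) ghat delta)
      + final_loss (P_t P delta s0 (T + 1)) hhat F"
proof -
  let ?err = "\<lambda>s c. if ghat s c \<noteq> delta s c then 1 else (0::real)"
  let ?fin = "\<lambda>s. if hhat s \<noteq> (s \<in> F) then 1 else (0::real)"
  have "word_loss P delta s0 T (\<lambda>x. hhat (run ghat s0 x)) (\<lambda>x. run delta s0 x \<in> F)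
      \<le> (\<Sum>x\<in>words T. word_prob P delta s0 x
          * ((\<Sum>t<T. ?err (run delta s0 (take t x)) (x ! t)) + ?fin (run delta s0 x)))"
    unfolding word_loss_def
  proof (intro sum_mono mult_left_mono)
    fix x :: "'b list"
    assume "x \<in> words T"
    then have "T = length x"
      by simp
    then show "(if hhat (run ghat s0 x) \<noteq> (run delta s0 x \<in> F) then 1 else 0)
        \<le> (\<Sum>t<T. ?err (run delta s0 (take t x)) (x ! t)) + ?fin (run delta s0 x)"
      using misclassification_le_errors[where g = ghat and d = delta and s = s0 and h = hhat]
      by (simp only:)
    show "0 \<le> word_prob P delta s0 x"
      by (rule word_prob_nonneg[OF assms])
  qed
  also have "\<dots> = (\<Sum>t<T. \<Sum>x\<in>words T. word_prob P delta s0 x * ?err (run delta s0 (take t x)) (x ! t))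
      + (\<Sum>x\<in>words T. word_prob P delta s0 x * ?fin (run delta s0 x))"
    by (simp only: distrib_left sum.distrib sum_distrib_left sum.swap[of _ "words T"])
  also have "\<dots> = (\<Sum>t=1..T. trans_loss (\<lambda>(s, c). P_t P delta s0 t s * P s c) ghat delta)
      + final_loss (P_t P delta s0 (T + 1)) hhat F"
  proof -
    have "(\<Sum>x\<in>words T. word_prob P delta s0 x * ?err (run delta s0 (take t x)) (x ! t))
        = trans_loss (\<lambda>(s, c). P_t P delta s0 (Suc t) s * P s c) ghat delta" if "t < T" for t
      unfolding trans_loss_P_t_Suc by (rule sum_word_prob_step[OF assms that, where h = ?err])
    moreover have "(\<Sum>x\<in>words T. word_prob P delta s0 x * ?fin (run delta s0 x))
        = final_loss (P_t P delta s0 (T + 1)) hhat F"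
      unfolding final_loss_def P_t_def add_diff_cancel_right' by (rule sum_word_prob_run)
    ultimately show ?thesis
      by (simp add: sum.atLeast1_atMost_eq)
  qed
  finally show ?thesis .
qed

theorem theorem4p6:
  fixes delta :: "'a::finite \<Rightarrow> 'b::finite \<Rightarrow> 'a" and s0 :: 'a and F :: "'a set"
    and T :: nat and P Q :: "'a \<Rightarrow> 'b \<Rightarrow> real"
    and ghat :: "'a \<Rightarrow> 'b \<Rightarrow> 'a" and hhat :: "'a \<Rightarrow> bool"
  assumes "T \<ge> 1"
    and "is_cond_dist P" and "is_cond_dist Q"
  shows "word_loss Q delta s0 T (\<lambda>x. hhat (run ghat s0 x)) (\<lambda>x. run delta s0 x \<in> F)
    \<le> (\<Sum>t=1..T. trans_loss (\<lambda>(s,c). P_t P delta s0 t s * P s c) ghat delta)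
       + final_loss (P_t P delta s0 (T+1)) hhat F
       + 2 * real T ^ 2 * (MAX s\<in>UNIV. TV (P s) (Q s))"
proof -
  define eps where "eps = (MAX s\<in>UNIV. TV (P s) (Q s))"
  have TV_le: "TV (P s) (Q s) \<le> eps" for s
    unfolding eps_def by simp
  have "0 \<le> eps"
    using TV_nonneg[of "P s0" "Q s0"] TV_le[of s0] by linarith
  moreover have "real T \<le> 2 * real T ^ 2"
    using \<open>T \<ge> 1\<close> by (simp add: power2_eq_square)
  ultimately have "real T * eps \<le> 2 * real T ^ 2 * eps"
    by (rule mult_right_mono[rotated])
  then show ?thesis
    using word_loss_change_measure[OF assms(2,3) TV_le,
        of delta s0 T "\<lambda>x. hhat (run ghat s0 x)" "\<lambda>x. run delta s0 x \<in> F"]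
      word_loss_le_surrogate_loss[OF assms(2), of delta s0 T hhat ghat F]
    unfolding eps_def by linarith
qed

end
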